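(* Let $G$ be a simple graph on $n$ vertices with $cM_2(G)\ge cM_2(H)$ for every simple graph $H$ on $n$ vertices, and let $F$, $X$ be as defined in the context. If $u,v\in X$ are distinct and $uv\notin E(G)$, then $d_G(u)=d_G(v)$, and $d_G(w)\ne d_G(u)$ for every $w\in X\setminus\{u,v\}$.
   Context: All graphs are finite and simple; $d_G(u)$ is the degree of $u$ and $cM_2(G)=\sum_{uv\in E(G)}|d_G(u)^2-d_G(v)^2|$. The canonical mixed graph $F$ of $G$ has vertex set $V(G)$; for each edge $uv\in E(G)$: if $d_G(u)>d_G(v)$ then $F$ contains the arc $\overrightarrow{uv}$, and if $d_G(u)=d_G(v)$ then $F$ contains the undirected edge $uv$. $d^+_F(u)$ (resp. $d^-_F(u)$) is the number of arcs of $F$ with tail (resp. head) $u$. $X=\{u\in V(G): d^+_F(u)\ge d^-_F(u)\}$ and $Y=\{u\in V(G): d^+_F(u)< d^-_F(u)\}$. *)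

theory Defs
  imports Main
begin

definition simple_graph :: "'a set \<Rightarrow> 'a set set \<Rightarrow> bool" where
  "simple_graph V E \<longleftrightarrow> finite V \<and> (\<forall>e\<in>E. e \<subseteq> V \<and> card e = 2)"

definition deg :: "'a set \<Rightarrow> 'a set set \<Rightarrow> 'a \<Rightarrow> nat" where
  "deg V E u = card {v\<in>V. {u, v} \<in> E}"

text \<open>cM2(G) = sum over edges uv of |d(u)^2 - d(v)^2|; each edge is counted twice in the
  double sum over ordered pairs, hence the division by 2.\<close>
definition cM2 :: "'a set \<Rightarrow> 'a set set \<Rightarrow> int" where
  "cM2 V E = (\<Sum>u\<in>V. \<Sum>v\<in>V. if {u, v} \<in> E
       then \<bar>int (deg V E u) ^ 2 - int (deg V E v) ^ 2\<bar> else 0) div 2"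

text \<open>Canonical mixed graph F: arc u->v iff uv is an edge and d(u) > d(v).\<close>
definition out_deg_F :: "'a set \<Rightarrow> 'a set set \<Rightarrow> 'a \<Rightarrow> nat" where
  "out_deg_F V E u = card {v\<in>V. {u, v} \<in> E \<and> deg V E v < deg V E u}"

definition in_deg_F :: "'a set \<Rightarrow> 'a set set \<Rightarrow> 'a \<Rightarrow> nat" where
  "in_deg_F V E u = card {v\<in>V. {u, v} \<in> E \<and> deg V E u < deg V E v}"

definition X_set :: "'a set \<Rightarrow> 'a set set \<Rightarrow> 'a set" where
  "X_set V E = {u\<in>V. in_deg_F V E u \<le> out_deg_F V E u}"

end

theory Submission
  imports Defs
begin

text \<open>Adding the missing edge uv to G changes cM2 by |(d(u)+1)^2 - (d(v)+1)^2| plus, for each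
  endpoint x, the amount (2 d(x) + 1) (d+(x) + d0(x) - d-(x)), where d0(x) counts the undirected
  edges of F at x: a term |d(x)^2 - d(y)^2| at an old edge xy grows by 2 d(x) + 1 if d(y) \<le> d(x)
  and drops by 2 d(x) + 1 otherwise. For u, v in X all three contributions are nonnegative, so
  maximality forces d(u) = d(v), no undirected edges at u or v, and G + uv is again extremal.
  A third w in X with d(w) = d(u) would then be adjacent to neither u nor v, and u and w would both
  lie in X for G + uv; the first part applied to u, w in G + uv gives d(u) + 1 = d(w), which is
  absurd.\<close>

definition cM2_term :: "'a set \<Rightarrow> 'a set set \<Rightarrow> 'a \<Rightarrow> 'a \<Rightarrow> int" where
  "cM2_term V E x y =
     (if {x, y} \<in> E then \<bar>int (deg V E x) ^ 2 - int (deg V E y) ^ 2\<bar> else 0)"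

lemma cM2_eq_sum_cM2_term: "cM2 V E = (\<Sum>x\<in>V. \<Sum>y\<in>V. cM2_term V E x y) div 2"
  by (simp add: cM2_def cM2_term_def)

lemma cM2_term_commute: "cM2_term V E x y = cM2_term V E y x"
  by (simp add: cM2_term_def insert_commute abs_minus_commute)

lemma cM2_term_self: "simple_graph V E \<Longrightarrow> cM2_term V E x x = 0"
  by (auto simp: cM2_term_def simple_graph_def)

lemma sum_remove_two:
  assumes "finite A" "a \<in> A" "b \<in> A" "a \<noteq> b"
  shows "sum f A = f a + f b + sum f (A - {a, b})"
proof -
  have "sum f A = f a + sum f (A - {a})"
    using assms by (simp add: sum.remove)
  also have "sum f (A - {a}) = f b + sum f (A - {a} - {b})"
    using assms by (intro sum.remove) auto
  also have "A - {a} - {b} = A - {a, b}"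
    by auto
  finally show ?thesis
    by (simp add: add.assoc)
qed

lemma sum_sum_supported_on_two_rows:
  fixes D :: "'a \<Rightarrow> 'a \<Rightarrow> 'b::comm_ring_1"
  assumes "finite V" "u \<in> V" "v \<in> V" "u \<noteq> v"
    and sym: "\<And>x y. D x y = D y x" and "D u u = 0" "D v v = 0"
    and rest: "\<And>x y. x \<in> V - {u, v} \<Longrightarrow> y \<in> V - {u, v} \<Longrightarrow> D x y = 0"
  shows "(\<Sum>x\<in>V. \<Sum>y\<in>V. D x y)
           = 2 * (D u v + (\<Sum>y\<in>V - {u, v}. D u y) + (\<Sum>y\<in>V - {u, v}. D v y))"
proof -
  note split = sum_remove_two[OF assms(1-4)]
  have "(\<Sum>y\<in>V. D x y) = D u x + D v x" if "x \<in> V - {u, v}" for x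
    using split[of "D x"] rest[OF that] sym[of x u] sym[of x v] by simp
  then have "(\<Sum>x\<in>V - {u, v}. \<Sum>y\<in>V. D x y) = (\<Sum>y\<in>V - {u, v}. D u y) + (\<Sum>y\<in>V - {u, v}. D v y)"
    by (simp add: sum.distrib)
  moreover have "(\<Sum>y\<in>V. D u y) = D u v + (\<Sum>y\<in>V - {u, v}. D u y)"
    using split[of "D u"] assms(6) by simp
  moreover have "(\<Sum>y\<in>V. D v y) = D u v + (\<Sum>y\<in>V - {u, v}. D v y)"
    using split[of "D v"] assms(7) sym[of v u] by simp
  moreover have "(\<Sum>x\<in>V. \<Sum>y\<in>V. D x y)
      = (\<Sum>y\<in>V. D u y) + (\<Sum>y\<in>V. D v y) + (\<Sum>x\<in>V - {u, v}. \<Sum>y\<in>V. D x y)"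
    by (rule split)
  ultimately show ?thesis
    by (simp only: mult_2) (simp only: ac_simps)
qed

lemma deg_insert_edge_endpoint:
  assumes "finite V" "v \<in> V" "{u, v} \<notin> E"
  shows "deg V (insert {u, v} E) u = deg V E u + 1"
proof -
  have "{y\<in>V. {u, y} \<in> insert {u, v} E} = insert v {y\<in>V. {u, y} \<in> E}"
    using assms(2) by (auto simp: doubleton_eq_iff)
  then show ?thesis
    using assms by (simp add: deg_def)
qed

lemma deg_insert_edge_other:
  "x \<noteq> u \<Longrightarrow> x \<noteq> v \<Longrightarrow> deg V (insert {u, v} E) x = deg V E x"
  unfolding deg_def by (rule arg_cong[where f = card]) (auto simp: doubleton_eq_iff)

lemma abs_square_diff_step:
  fixes a t :: nat
  shows "\<bar>int (a + 1) ^ 2 - int t ^ 2\<bar> - \<bar>int a ^ 2 - int t ^ 2\<bar>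
           = (if t \<le> a then 2 * int a + 1 else - (2 * int a + 1))"
proof (cases "t \<le> a")
  case True
  then have "int t ^ 2 \<le> int a ^ 2" "int t ^ 2 \<le> int (a + 1) ^ 2"
    by (simp_all add: power_mono)
  with True show ?thesis by (simp add: power2_eq_square algebra_simps)
next
  case False
  then have "int a ^ 2 \<le> int t ^ 2" "int (a + 1) ^ 2 \<le> int t ^ 2"
    by (simp_all add: power_mono)
  with False show ?thesis by (simp add: power2_eq_square algebra_simps)
qed

definition undir_deg_F :: "'a set \<Rightarrow> 'a set set \<Rightarrow> 'a \<Rightarrow> nat" where
  "undir_deg_F V E u = card {v\<in>V. {u, v} \<in> E \<and> deg V E v = deg V E u}"

definition degree_raise_gain :: "'a set \<Rightarrow> 'a set set \<Rightarrow> 'a \<Rightarrow> int" where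
  "degree_raise_gain V E u = (2 * int (deg V E u) + 1) *
     (int (out_deg_F V E u) + int (undir_deg_F V E u) - int (in_deg_F V E u))"

lemma sum_sign_by_threshold:
  fixes d :: "'a \<Rightarrow> nat" and c :: int
  assumes "finite N"
  shows "(\<Sum>y\<in>N. if d y \<le> a then c else - c)
           = c * (int (card {y\<in>N. d y < a}) + int (card {y\<in>N. d y = a}) - int (card {y\<in>N. a < d y}))"
proof -
  have "(\<Sum>y\<in>N. if d y \<le> a then c else - c)
      = (\<Sum>y\<in>N. c * (of_bool (d y < a) + of_bool (d y = a) - of_bool (a < d y)))"
    by (intro sum.cong) auto
  also have "\<dots> = c * ((\<Sum>y\<in>N. of_bool (d y < a)) + (\<Sum>y\<in>N. of_bool (d y = a))
                       - (\<Sum>y\<in>N. of_bool (a < d y)))"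
    by (simp add: sum_distrib_left [symmetric] sum.distrib sum_subtractf)
  finally show ?thesis
    using assms by (simp add: Int_def conj_commute)
qed

lemma cM2_term_row_insert_edge:
  assumes sg: "simple_graph V E" and "v \<in> V" and ne: "{u, v} \<notin> E"
  shows "(\<Sum>y\<in>V - {u, v}. cM2_term V (insert {u, v} E) u y - cM2_term V E u y)
           = degree_raise_gain V E u"
proof -
  define a where "a = deg V E u"
  have finV: "finite V"
    using sg by (simp add: simple_graph_def)
  have finite_neighbours: "finite {y\<in>V. {u, y} \<in> E}"
    using finV by simp
  have "cM2_term V (insert {u, v} E) u y - cM2_term V E u y
          = (if {u, y} \<in> E then if deg V E y \<le> a then 2 * int a + 1 else - (2 * int a + 1) else 0)"
    if "y \<in> V - {u, v}" for y
  proof -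
    have "{u, y} \<in> insert {u, v} E \<longleftrightarrow> {u, y} \<in> E"
      using that by (auto simp: doubleton_eq_iff)
    with that show ?thesis
      using abs_square_diff_step[of a "deg V E y"]
      by (simp add: cM2_term_def deg_insert_edge_endpoint[OF finV \<open>v \<in> V\<close> ne]
          deg_insert_edge_other a_def)
  qed
  then have "(\<Sum>y\<in>V - {u, v}. cM2_term V (insert {u, v} E) u y - cM2_term V E u y)
      = (\<Sum>y\<in>{y\<in>V - {u, v}. {u, y} \<in> E}. if deg V E y \<le> a then 2 * int a + 1 else - (2 * int a + 1))"
    using finV by (simp add: sum.inter_filter [symmetric] del: sum.inter_filter)
  also have "{y\<in>V - {u, v}. {u, y} \<in> E} = {y\<in>V. {u, y} \<in> E}"
    using sg ne by (auto simp: simple_graph_def)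
  also have "(\<Sum>y\<in>{y\<in>V. {u, y} \<in> E}. if deg V E y \<le> a then 2 * int a + 1 else - (2 * int a + 1))
      = degree_raise_gain V E u"
    unfolding sum_sign_by_threshold[OF finite_neighbours]
    by (simp add: degree_raise_gain_def out_deg_F_def in_deg_F_def undir_deg_F_def a_def)
  finally show ?thesis .
qed

lemma simple_graph_insert_edge:
  "simple_graph V E \<Longrightarrow> u \<in> V \<Longrightarrow> v \<in> V \<Longrightarrow> u \<noteq> v \<Longrightarrow> simple_graph V (insert {u, v} E)"
  by (auto simp: simple_graph_def)

lemma cM2_insert_edge:
  assumes sg: "simple_graph V E" and "u \<in> V" "v \<in> V" "u \<noteq> v" and ne: "{u, v} \<notin> E"
  shows "cM2 V (insert {u, v} E) = cM2 V E + \<bar>int (deg V E u + 1) ^ 2 - int (deg V E v + 1) ^ 2\<bar>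
           + degree_raise_gain V E u + degree_raise_gain V E v"
proof -
  define E' where "E' = insert {u, v} E"
  define K where "K = \<bar>int (deg V E u + 1) ^ 2 - int (deg V E v + 1) ^ 2\<bar>
    + degree_raise_gain V E u + degree_raise_gain V E v"
  define D where "D x y = cM2_term V E' x y - cM2_term V E x y" for x y
  have finV: "finite V"
    using sg by (simp add: simple_graph_def)
  have sg': "simple_graph V E'"
    using simple_graph_insert_edge[OF assms(1-4)] by (simp add: E'_def)
  have "D x y = 0" if "x \<in> V - {u, v}" "y \<in> V - {u, v}" for x y
  proof -
    have "{x, y} \<in> E' \<longleftrightarrow> {x, y} \<in> E"
      using that by (auto simp: E'_def doubleton_eq_iff)
    with that show ?thesis
      by (simp add: D_def cM2_term_def E'_def deg_insert_edge_other)
  qed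
  then have "(\<Sum>x\<in>V. \<Sum>y\<in>V. D x y)
      = 2 * (D u v + (\<Sum>y\<in>V - {u, v}. D u y) + (\<Sum>y\<in>V - {v, u}. D v y))"
    using sum_sum_supported_on_two_rows[OF finV assms(2-4), of D]
    by (simp add: D_def cM2_term_commute cM2_term_self[OF sg] cM2_term_self[OF sg'] insert_commute)
  also have "D u v = \<bar>int (deg V E u + 1) ^ 2 - int (deg V E v + 1) ^ 2\<bar>"
    using deg_insert_edge_endpoint[OF finV assms(3) ne]
      deg_insert_edge_endpoint[OF finV assms(2), where u = v and E = E] ne
    by (simp add: D_def cM2_term_def E'_def insert_commute)
  also have "(\<Sum>y\<in>V - {u, v}. D u y) = degree_raise_gain V E u"
    unfolding D_def E'_def by (rule cM2_term_row_insert_edge[OF sg assms(3) ne])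
  also have "(\<Sum>y\<in>V - {v, u}. D v y) = degree_raise_gain V E v"
    unfolding D_def E'_def insert_commute[of u v]
    by (rule cM2_term_row_insert_edge[OF sg assms(2)]) (simp add: insert_commute ne)
  finally have "(\<Sum>x\<in>V. \<Sum>y\<in>V. cM2_term V E' x y) = (\<Sum>x\<in>V. \<Sum>y\<in>V. cM2_term V E x y) + 2 * K"
    unfolding D_def sum_subtractf K_def by simp
  then have "cM2 V E' = cM2 V E + K"
    unfolding cM2_eq_sum_cM2_term by simp
  then show ?thesis
    by (simp add: E'_def K_def)
qed

lemma undir_deg_F_eq_0_iff:
  "finite V \<Longrightarrow> undir_deg_F V E u = 0 \<longleftrightarrow> (\<forall>y\<in>V. {u, y} \<in> E \<longrightarrow> deg V E y \<noteq> deg V E u)"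
  by (auto simp: undir_deg_F_def)

lemma degree_raise_gain_ge_undir:
  "u \<in> X_set V E \<Longrightarrow>
     (2 * int (deg V E u) + 1) * int (undir_deg_F V E u) \<le> degree_raise_gain V E u"
  unfolding degree_raise_gain_def X_set_def by (intro mult_left_mono) auto

lemma maximal_nonadjacent_in_X:
  assumes sg: "simple_graph V E"
    and max: "\<forall>H. simple_graph V H \<longrightarrow> cM2 V H \<le> cM2 V E"
    and uX: "u \<in> X_set V E" and vX: "v \<in> X_set V E" and "u \<noteq> v" and ne: "{u, v} \<notin> E"
  shows "deg V E u = deg V E v" and "undir_deg_F V E u = 0" and "undir_deg_F V E v = 0"
    and "cM2 V (insert {u, v} E) = cM2 V E"
proof -
  have "u \<in> V" "v \<in> V"
    using uX vX by (auto simp: X_set_def)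
  note cM2' = cM2_insert_edge[OF sg this \<open>u \<noteq> v\<close> ne]
  have "cM2 V (insert {u, v} E) \<le> cM2 V E"
    using max simple_graph_insert_edge[OF sg \<open>u \<in> V\<close> \<open>v \<in> V\<close> \<open>u \<noteq> v\<close>] by blast
  moreover note degree_raise_gain_ge_undir[OF uX] degree_raise_gain_ge_undir[OF vX]
  moreover have "0 \<le> (2 * int (deg V E u) + 1) * int (undir_deg_F V E u)"
    and "0 \<le> (2 * int (deg V E v) + 1) * int (undir_deg_F V E v)"
    by simp_all
  moreover note abs_ge_zero[of "int (deg V E u + 1) ^ 2 - int (deg V E v + 1) ^ 2"]
  ultimately have abs0: "\<bar>int (deg V E u + 1) ^ 2 - int (deg V E v + 1) ^ 2\<bar> = 0"
    and undir0: "(2 * int (deg V E u) + 1) * int (undir_deg_F V E u) = 0"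
      "(2 * int (deg V E v) + 1) * int (undir_deg_F V E v) = 0"
    and "cM2 V (insert {u, v} E) = cM2 V E"
    unfolding cM2' by linarith+
  then show "cM2 V (insert {u, v} E) = cM2 V E"
    by simp
  have "int (deg V E u + 1) ^ 2 = int (deg V E v + 1) ^ 2"
    using abs0 by simp
  then show "deg V E u = deg V E v"
    by (metis add_right_cancel of_nat_eq_iff of_nat_power power2_eq_iff_nonneg zero_le)
  show "undir_deg_F V E u = 0" "undir_deg_F V E v = 0"
    using undir0 by simp_all
qed

lemma X_set_insert_edge_endpoint:
  assumes "finite V" "v \<in> V" and ne: "{u, v} \<notin> E" and "deg V E v \<le> deg V E u"
    and uX: "u \<in> X_set V E"
  shows "u \<in> X_set V (insert {u, v} E)"
proof -
  define E' where "E' = insert {u, v} E"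
  have du: "deg V E' u = deg V E u + 1"
    unfolding E'_def by (rule deg_insert_edge_endpoint[OF assms(1-3)])
  have "deg V E' v \<le> deg V E' u"
  proof (cases "u = v")
    case False
    have "u \<in> V"
      using uX by (simp add: X_set_def)
    then have "deg V E' v = deg V E v + 1"
      using deg_insert_edge_endpoint[OF assms(1) _, where u = v and E = E] ne
      by (simp add: E'_def insert_commute)
    with du \<open>deg V E v \<le> deg V E u\<close> show ?thesis
      by simp
  qed simp
  have "in_deg_F V E' u \<le> in_deg_F V E u"
    unfolding in_deg_F_def
  proof (rule card_mono)
    show "{y\<in>V. {u, y} \<in> E' \<and> deg V E' u < deg V E' y} \<subseteq> {y\<in>V. {u, y} \<in> E \<and> deg V E u < deg V E y}"
    proof safe
      fix y assume "y \<in> V" "{u, y} \<in> E'" "deg V E' u < deg V E' y"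
      moreover from this have "y \<noteq> u" "y \<noteq> v"
        using \<open>deg V E' v \<le> deg V E' u\<close> by auto
      ultimately show "{u, y} \<in> E" "deg V E u < deg V E y"
        using du by (auto simp: E'_def doubleton_eq_iff deg_insert_edge_other)
    qed
  qed (use assms(1) in simp)
  moreover have "out_deg_F V E u \<le> out_deg_F V E' u"
    unfolding out_deg_F_def
  proof (rule card_mono)
    show "{y\<in>V. {u, y} \<in> E \<and> deg V E y < deg V E u} \<subseteq> {y\<in>V. {u, y} \<in> E' \<and> deg V E' y < deg V E' u}"
    proof safe
      fix y assume "y \<in> V" "{u, y} \<in> E" "deg V E y < deg V E u"
      moreover from this have "y \<noteq> u" "y \<noteq> v"
        using ne by auto
      ultimately show "{u, y} \<in> E'" "deg V E' y < deg V E' u"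
        using du by (simp_all add: E'_def deg_insert_edge_other)
    qed
  qed (use assms(1) in simp)
  ultimately show ?thesis
    using uX by (auto simp: X_set_def E'_def)
qed

lemma X_set_insert_edge_far:
  assumes "w \<noteq> u" "w \<noteq> v" "{u, w} \<notin> E" "{v, w} \<notin> E"
  shows "w \<in> X_set V (insert {u, v} E) \<longleftrightarrow> w \<in> X_set V E"
proof -
  define E' where "E' = insert {u, v} E"
  have "{y\<in>V. {w, y} \<in> E' \<and> P (deg V E' y)} = {y\<in>V. {w, y} \<in> E \<and> P (deg V E y)}"
    for P :: "nat \<Rightarrow> bool"
  proof -
    have "y \<noteq> u" "y \<noteq> v" if "{w, y} \<in> E" for y
      using assms that by (auto simp: insert_commute)
    then show ?thesis
      using assms by (auto simp: E'_def doubleton_eq_iff deg_insert_edge_other)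
  qed
  from this[of "\<lambda>d. deg V E w < d"] this[of "\<lambda>d. d < deg V E w"] show ?thesis
    using deg_insert_edge_other[OF assms(1,2), of V E]
    by (simp add: X_set_def in_deg_F_def out_deg_F_def E'_def)
qed

lemma maximal_X_no_third_equal_degree:
  assumes sg: "simple_graph V E"
    and max: "\<forall>H. simple_graph V H \<longrightarrow> cM2 V H \<le> cM2 V E"
    and uX: "u \<in> X_set V E" and vX: "v \<in> X_set V E" and wX: "w \<in> X_set V E"
    and "u \<noteq> v" and ne: "{u, v} \<notin> E" and "w \<noteq> u" "w \<noteq> v"
  shows "deg V E w \<noteq> deg V E u"
proof
  assume dw: "deg V E w = deg V E u"
  note uv_props = maximal_nonadjacent_in_X[OF sg max uX vX \<open>u \<noteq> v\<close> ne]
  have finV: "finite V"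
    using sg by (simp add: simple_graph_def)
  have "u \<in> V" "v \<in> V" "w \<in> V"
    using uX vX wX by (auto simp: X_set_def)
  have "{u, w} \<notin> E" "{v, w} \<notin> E"
    using uv_props(1-3) dw \<open>w \<in> V\<close> by (auto simp: undir_deg_F_eq_0_iff[OF finV])
  define E' where "E' = insert {u, v} E"
  have sg': "simple_graph V E'"
    unfolding E'_def using simple_graph_insert_edge[OF sg \<open>u \<in> V\<close> \<open>v \<in> V\<close> \<open>u \<noteq> v\<close>] .
  have max': "\<forall>H. simple_graph V H \<longrightarrow> cM2 V H \<le> cM2 V E'"
    using max uv_props(4) by (simp add: E'_def)
  have uX': "u \<in> X_set V E'"
    unfolding E'_def using uv_props(1) by (intro X_set_insert_edge_endpoint[OF finV \<open>v \<in> V\<close> ne _ uX]) simp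
  have wX': "w \<in> X_set V E'"
    unfolding E'_def X_set_insert_edge_far[OF \<open>w \<noteq> u\<close> \<open>w \<noteq> v\<close> \<open>{u, w} \<notin> E\<close> \<open>{v, w} \<notin> E\<close>]
    by (rule wX)
  have "{u, w} \<notin> E'"
    using \<open>{u, w} \<notin> E\<close> \<open>w \<noteq> v\<close> by (auto simp: E'_def doubleton_eq_iff)
  then have "deg V E' u = deg V E' w"
    using maximal_nonadjacent_in_X(1)[OF sg' max' uX' wX'] \<open>w \<noteq> u\<close> by simp
  then show False
    using deg_insert_edge_endpoint[OF finV \<open>v \<in> V\<close> ne] deg_insert_edge_other[OF \<open>w \<noteq> u\<close> \<open>w \<noteq> v\<close>] dw
    by (simp add: E'_def)
qed

theorem claim1:
  fixes V :: "'a set" and E :: "'a set set" and u v :: 'a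
  assumes "simple_graph V E"
    and "\<forall>H. simple_graph V H \<longrightarrow> cM2 V H \<le> cM2 V E"
    and "u \<in> X_set V E" and "v \<in> X_set V E" and "u \<noteq> v" and "{u, v} \<notin> E"
  shows "deg V E u = deg V E v \<and> (\<forall>w\<in>X_set V E - {u, v}. deg V E w \<noteq> deg V E u)"
  using maximal_nonadjacent_in_X(1)[OF assms] maximal_X_no_third_equal_degree[OF assms(1-4) _ assms(5,6)]
  by blast

end
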